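(* Let $n\ge 2$. Let $\Theta\subset\mathbb{R}^{n+\binom{n}{2}}$ be the set of all pairs $(\boldsymbol{\lambda},G)$, where $\boldsymbol{\lambda}=(\lambda_1,\dots,\lambda_n)$ consists of non-zero reals with $\lambda_p\ne\pm\lambda_q$ for $p\ne q$, and $G=(g_{pq})$ is a real symmetric $n\times n$ matrix with $g_{pp}=1$, such that the following hold for $G$ and the matrix $H=(h_{pq})$ defined by $h_{pp}=1$ and $h_{pq}=\frac{2\lambda_p(\lambda_pg_{pq}-\lambda_q)}{\lambda_p^2-\lambda_q^2}$ for $p\ne q$: (i) $G$ is non-degenerate indefinite with negative index of inertia $1$, and all principal minors of $G$ of sizes $2\times2,\dots,(n-1)\times(n-1)$ are strictly positive; (ii) $\sum_{q=1}^n\sum_{r=1}^ng^{qr}h_{pq}h_{pr}<0$ for $p=1,\dots,n$, where $(g^{qr})=G^{-1}$. Then $\Theta$ is non-empty.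
   Context: (By the paper's construction, points of $\Theta$ correspond to flexible cross-polytopes in Lobachevsky space $\Lambda^n$ of the simplest type, in which all tangents of half dihedral angles at one facet stay proportional.) *)

theory Defs
  imports "HOL-Analysis.Analysis"
begin

definition qform :: "real^'n^'n \<Rightarrow> real^'n \<Rightarrow> real" where
  "qform G x = x \<bullet> (G *v x)"

text \<open>Negative index of inertia: maximal dimension of a subspace on which the
  quadratic form is negative definite (Sylvester).\<close>
definition neg_index :: "real^'n^'n \<Rightarrow> nat" where
  "neg_index G = Max {dim V | V. subspace V \<and> (\<forall>x\<in>V. x \<noteq> 0 \<longrightarrow> qform G x < 0)}"

definition principal_minor :: "real^'n^'n \<Rightarrow> 'n set \<Rightarrow> real" where
  "principal_minor G S = (\<Sum>p | p permutes S. of_int (sign p) * (\<Prod>i\<in>S. G $ i $ p i))"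

definition Hmat :: "real^'n \<Rightarrow> real^'n^'n \<Rightarrow> real^'n^'n" where
  "Hmat l G = (\<chi> p q. if p = q then 1
      else 2 * l$p * (l$p * G$p$q - l$q) / ((l$p)^2 - (l$q)^2))"

definition Theta :: "((real^'n) \<times> (real^'n^'n)) set" where
  "Theta = {(l :: real^'n, G :: real^'n^'n).
     (\<forall>p. l$p \<noteq> 0) \<and> (\<forall>p q. p \<noteq> q \<longrightarrow> l$p \<noteq> l$q \<and> l$p \<noteq> - l$q) \<and>
     transpose G = G \<and> (\<forall>p. G$p$p = 1) \<and>
     det G \<noteq> 0 \<and> (\<exists>x. qform G x > 0) \<and> (\<exists>x. qform G x < 0) \<and>
     neg_index G = 1 \<and>
     (\<forall>S. 2 \<le> card S \<and> card S \<le> CARD('n) - 1 \<longrightarrow> principal_minor G S > 0) \<and>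
     (\<forall>p. (\<Sum>q\<in>UNIV. \<Sum>r\<in>UNIV. matrix_inv G $ q $ r * Hmat l G $ p $ q * Hmat l G $ p $ r) < 0)}"

end

(*
  The matrix G is an arrow matrix: ones on the diagonal, a constant a in row and column s,
  zeros elsewhere, with 1/(n-1) < a^2 < 1/(n-2). Its principal minors are 1 - (|S|-1) a^2, so
  the proper ones are positive while det G = 1 - (n-1) a^2 < 0, and G is positive definite on the
  hyperplane x_s = 0, so its negative index is 1.

  Take lambda_p = M^(k_p) with distinct exponents and k_s = 0. As M -> infinity, h_pq tends to
  2 g_pq when lambda_p dominates lambda_q and to 0 otherwise, so H tends to the identity plus 2a
  in column s. The row forms h_p G^-1 h_p^T then tend to 1/det G and 1 + a^2/det G, both
  negative, and a large M gives a point of Theta.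
*)
theory Submission
  imports Defs
begin

lemma det_add_row_combination:
  fixes A :: "'a::field^'n^'n"
  assumes "k \<notin> T"
  shows "det (\<chi> i. if i = k then row k A + (\<Sum>j\<in>T. c j *s row j A) else row i A) = det A"
proof (rule det_row_span)
  show "(\<Sum>j\<in>T. c j *s row j A) \<in> vec.span {row j A |j. j \<noteq> k}"
    using assms by (intro vec.span_sum vec.span_scale) (auto intro: vec.span_base)
qed

lemma principal_minor_eq_det:
  fixes G :: "real^'n^'n"
  shows "principal_minor G S = det (\<chi> i j. if i \<in> S \<and> j \<in> S then G$i$j else if i = j then 1 else 0)"
proof -
  define A :: "real^'n^'n" where "A = (\<chi> i j. if i \<in> S \<and> j \<in> S then G$i$j else if i = j then 1 else 0)"
  have prod_S: "(\<Prod>i\<in>UNIV. A $ i $ p i) = (\<Prod>i\<in>S. G $ i $ p i)" if p: "p permutes S" for p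
  proof -
    have "(\<Prod>i\<in>UNIV. A $ i $ p i) = (\<Prod>i\<in>S. A $ i $ p i) * (\<Prod>i\<in>UNIV-S. A $ i $ p i)"
      by (metis mult.commute prod.subset_diff finite subset_UNIV)
    also have "(\<Prod>i\<in>UNIV-S. A $ i $ p i) = 1"
      using p by (intro prod.neutral) (auto simp: A_def permutes_def)
    also have "(\<Prod>i\<in>S. A $ i $ p i) = (\<Prod>i\<in>S. G $ i $ p i)"
      using p by (intro prod.cong) (auto simp: A_def permutes_in_image)
    finally show ?thesis by simp
  qed
  have prod_vanishes: "(\<Prod>i\<in>UNIV. A $ i $ p i) = 0" if "p permutes UNIV" "\<not> p permutes S" for p
  proof -
    have "\<exists>i. i \<notin> S \<and> p i \<noteq> i"
      using that permutes_superset[of p UNIV S] by blast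
    then obtain i where "i \<notin> S" "p i \<noteq> i"
      by blast
    then have "A $ i $ p i = 0" by (simp add: A_def)
    then show ?thesis by (meson UNIV_I finite prod_zero)
  qed
  have "det A = (\<Sum>p | p permutes S. of_int (sign p) * (\<Prod>i\<in>UNIV. A $ i $ p i))"
    unfolding det_def
    by (rule sum.mono_neutral_right) (auto simp: finite_permutations prod_vanishes intro: permutes_subset)
  also have "\<dots> = principal_minor G S"
    unfolding principal_minor_def by (intro sum.cong) (auto simp: prod_S)
  finally show ?thesis by (simp add: A_def)
qed

lemma matrix_inv_eqI:
  fixes A B :: "'a::field^'n^'n"
  assumes "A ** B = mat 1"
  shows "matrix_inv A = B"
proof -
  have "invertible A"
    using assms matrix_left_right_inverse unfolding invertible_def by blast
  then have "matrix_inv A ** A = mat 1"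
    unfolding matrix_inv_def invertible_def by (rule someI2_ex) simp
  then have "matrix_inv A = matrix_inv A ** (A ** B)"
    by (simp add: assms)
  also have "\<dots> = B"
    by (simp add: matrix_mul_assoc \<open>matrix_inv A ** A = mat 1\<close>)
  finally show ?thesis .
qed

lemma qform_scaleR: "qform G (c *\<^sub>R x) = c^2 * qform G x"
  by (simp add: qform_def matrix_vector_mult_scaleR power2_eq_square)

lemma neg_index_eq_1I:
  fixes G :: "real^'n^'n"
  assumes neg: "qform G w < 0"
    and "u \<noteq> 0" and pos: "\<And>x. u \<bullet> x = 0 \<Longrightarrow> x \<noteq> 0 \<Longrightarrow> qform G x > 0"
  shows "neg_index G = 1"
proof -
  define D where "D = {dim V | V. subspace V \<and> (\<forall>x\<in>V. x \<noteq> 0 \<longrightarrow> qform G x < 0)}"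
  have "1 \<in> D"
  proof -
    have "w \<noteq> 0"
      using neg by (auto simp: qform_def)
    moreover have "qform G x < 0" if x: "x \<in> span {w}" "x \<noteq> 0" for x
    proof -
      obtain c where "x = c *\<^sub>R w"
        using x(1) by (metis imageE real_vector.span_singleton)
      with x(2) neg show ?thesis
        by (simp add: qform_scaleR mult_pos_neg)
    qed
    ultimately show ?thesis
      unfolding D_def by (intro CollectI exI[of _ "span {w}"]) (simp add: dim_span dim_singleton)
  qed
  moreover have "d \<le> 1" if "d \<in> D" for d
  proof (rule ccontr)
    assume "\<not> d \<le> 1"
    obtain V where V: "d = dim V" "subspace V" "\<forall>x\<in>V. x \<noteq> 0 \<longrightarrow> qform G x < 0"
      using \<open>d \<in> D\<close> unfolding D_def by blast
    define W where "W = {x. u \<bullet> x = 0}"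
    have "dim {x + y |x y. x \<in> V \<and> y \<in> W} + dim (V \<inter> W) = dim V + dim W"
      unfolding W_def by (rule dim_sums_Int[OF V(2) subspace_hyperplane])
    moreover have "dim {x + y |x y. x \<in> V \<and> y \<in> W} \<le> CARD('n)"
      using dim_subset_UNIV[of "{x + y |x y. x \<in> V \<and> y \<in> W}"] by simp
    moreover have "dim W = CARD('n) - 1"
      unfolding W_def using \<open>u \<noteq> 0\<close> by (simp add: dim_hyperplane)
    ultimately have "dim (V \<inter> W) \<noteq> 0"
      using \<open>\<not> d \<le> 1\<close> V(1) by linarith
    then have "\<not> V \<inter> W \<subseteq> {0}"
      using dim_subset[of "V \<inter> W" "{0}"] by (auto simp: dim_singleton)
    then obtain x where "x \<in> V" "u \<bullet> x = 0" "x \<noteq> 0"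
      unfolding W_def by blast
    then show False
      using V(3) pos by force
  qed
  ultimately have "Max D = 1"
    by (intro Max_eqI finite_subset[of D "{..1}"]) auto
  then show ?thesis
    unfolding neg_index_def D_def .
qed

lemma real_card_UNIV_Diff_singleton: "real (card (UNIV - {k :: 'n::finite})) = real CARD('n) - 1"
  by (simp add: card_Diff_singleton of_nat_diff Suc_leI)

definition arrow_matrix :: "'n \<Rightarrow> ('n \<Rightarrow> real) \<Rightarrow> real^'n^'n" where
  "arrow_matrix k c = (\<chi> i j. if i = j then 1 else if i = k then c j else if j = k then c i else 0)"

lemma det_arrow_matrix:
  fixes c :: "'n::finite \<Rightarrow> real"
  shows "det (arrow_matrix k c) = 1 - (\<Sum>j\<in>UNIV-{k}. (c j)^2)"
proof -
  \<comment> \<open>Clearing row k with the other rows leaves d e_k there; the transpose of the result is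
    in turn one row operation away from the diagonal matrix B.\<close>
  define A where "A = arrow_matrix k c"
  define d where "d = 1 - (\<Sum>j\<in>UNIV-{k}. (c j)^2)"
  define B where "B = (\<chi> i j. if i = j then (if i = k then d else 1) else 0 :: real^'n^'n)"
  define A1 where "A1 = (\<chi> i. if i = k then row k A + (\<Sum>j\<in>UNIV-{k}. (- c j) *s row j A) else row i A)"
  have "(\<Sum>j\<in>UNIV-{k}. - c j * A $ j $ m) = (if m = k then d - 1 else - c m)" for m
  proof (cases "m = k")
    case True
    then show ?thesis
      by (auto simp: A_def arrow_matrix_def d_def power2_eq_square simp flip: sum_negf intro!: sum.cong)
  next
    case False
    then have "(\<Sum>j\<in>UNIV-{k}. - c j * A $ j $ m) = (\<Sum>j\<in>UNIV-{k}. if j = m then - c m else 0)"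
      by (intro sum.cong) (auto simp: A_def arrow_matrix_def)
    with False show ?thesis by simp
  qed
  then have A1_entries: "A1 $ i $ j = (if i = k then (if j = k then d else 0) else A$i$j)" for i j
    by (auto simp: A1_def row_def A_def arrow_matrix_def)
  have "(\<Sum>j\<in>UNIV-{k}. c j * B $ j $ m) = (if m = k then 0 else c m)" for m
  proof -
    have "(\<Sum>j\<in>UNIV-{k}. c j * B $ j $ m) = (\<Sum>j\<in>UNIV-{k}. if j = m then c m else 0)"
      by (intro sum.cong) (auto simp: B_def)
    then show ?thesis by simp
  qed
  then have "transpose A1 $ i $ m = (if i = k then row k B + (\<Sum>j\<in>UNIV-{k}. c j *s row j B) else row i B) $ m" for i m
    by (cases "i = k"; cases "m = k") (simp_all add: row_def transpose_def A1_entries A_def arrow_matrix_def B_def sum_component)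
  then have A1_transpose: "transpose A1 = (\<chi> i. if i = k then row k B + (\<Sum>j\<in>UNIV-{k}. c j *s row j B) else row i B)"
    by (simp add: vec_eq_iff)
  have "det A = det A1"
    unfolding A1_def by (rule det_add_row_combination[symmetric]) simp
  also have "\<dots> = det (transpose A1)"
    by simp
  also have "\<dots> = det B"
    unfolding A1_transpose by (rule det_add_row_combination) simp
  also have "\<dots> = d"
    by (subst det_diagonal) (auto simp: B_def prod.delta')
  finally show ?thesis by (simp add: A_def d_def)
qed

lemma principal_minor_arrow_matrix:
  fixes c :: "'n::finite \<Rightarrow> real"
  shows "principal_minor (arrow_matrix k c) S = (if k \<in> S then 1 - (\<Sum>j\<in>S-{k}. (c j)^2) else 1)"
proof -
  define c' where "c' j = (if k \<in> S \<and> j \<in> S then c j else 0)" for j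
  have "(\<chi> i j. if i \<in> S \<and> j \<in> S then arrow_matrix k c $i$j else if i = j then 1 else 0) = arrow_matrix k c'"
    by (auto simp: vec_eq_iff arrow_matrix_def c'_def)
  then have "principal_minor (arrow_matrix k c) S = 1 - (\<Sum>j\<in>UNIV-{k}. (c' j)^2)"
    by (simp add: principal_minor_eq_det det_arrow_matrix)
  also have "(\<Sum>j\<in>UNIV-{k}. (c' j)^2) = (if k \<in> S then \<Sum>j\<in>S-{k}. (c j)^2 else 0)"
  proof (cases "k \<in> S")
    case True
    then show ?thesis
      by (simp, intro sum.mono_neutral_cong_right) (auto simp: c'_def)
  qed (simp add: c'_def)
  finally show ?thesis by simp
qed

lemma arrow_matrix_mult_vector:
  fixes c :: "'n::finite \<Rightarrow> real"
  shows "(arrow_matrix k c *v x) $ i = x$i + (if i = k then (\<Sum>j\<in>UNIV-{k}. c j * x$j) else c i * x$k)"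
proof -
  have "(arrow_matrix k c *v x) $ i = (\<Sum>j\<in>UNIV. arrow_matrix k c $ i $ j * x$j)"
    by (simp add: matrix_vector_mult_def)
  also have "\<dots> = arrow_matrix k c $ i $ k * x$k + (\<Sum>j\<in>UNIV-{k}. arrow_matrix k c $ i $ j * x$j)"
    by (simp add: sum.remove)
  also have "\<dots> = x$i + (if i = k then (\<Sum>j\<in>UNIV-{k}. c j * x$j) else c i * x$k)"
  proof (cases "i = k")
    case False
    then have "(\<Sum>j\<in>UNIV-{k}. arrow_matrix k c $ i $ j * x$j) = (\<Sum>j\<in>UNIV-{k}. if j = i then x$i else 0)"
      by (intro sum.cong) (auto simp: arrow_matrix_def)
    with False show ?thesis
      by (simp add: arrow_matrix_def)
  qed (auto simp: arrow_matrix_def intro: sum.cong)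
  finally show ?thesis .
qed

lemma qform_arrow_matrix:
  fixes c :: "'n::finite \<Rightarrow> real"
  shows "qform (arrow_matrix k c) x = x \<bullet> x + 2 * x$k * (\<Sum>j\<in>UNIV-{k}. c j * x$j)"
proof -
  define S where "S = (\<Sum>j\<in>UNIV-{k}. c j * x$j)"
  have "qform (arrow_matrix k c) x = (\<Sum>i\<in>UNIV. x$i * x$i + (if i = k then x$k * S else c i * x$i * x$k))"
    unfolding qform_def inner_vec_def
    by (intro sum.cong) (auto simp: arrow_matrix_mult_vector S_def algebra_simps)
  also have "\<dots> = x \<bullet> x + (x$k * S + (\<Sum>i\<in>UNIV-{k}. c i * x$i * x$k))"
    by (simp add: sum.distrib inner_vec_def sum.remove[of UNIV k])
  also have "\<dots> = x \<bullet> x + 2 * x$k * S"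
    by (simp add: S_def sum_distrib_left algebra_simps)
  finally show ?thesis
    by (simp add: S_def)
qed

definition arrow_vector :: "'n \<Rightarrow> ('n \<Rightarrow> real) \<Rightarrow> real^'n" where
  "arrow_vector k c = (\<chi> j. if j = k then -1 else c j)"

lemma arrow_matrix_mult_arrow_vector:
  fixes c :: "'n::finite \<Rightarrow> real"
  shows "(arrow_matrix k c *v arrow_vector k c) $ i = (if i = k then (\<Sum>j\<in>UNIV-{k}. (c j)^2) - 1 else 0)"
  by (simp add: arrow_matrix_mult_vector arrow_vector_def power2_eq_square)

lemma qform_arrow_vector:
  fixes c :: "'n::finite \<Rightarrow> real"
  shows "qform (arrow_matrix k c) (arrow_vector k c) = 1 - (\<Sum>j\<in>UNIV-{k}. (c j)^2)"
proof -
  have "qform (arrow_matrix k c) (arrow_vector k c)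
      = (\<Sum>i\<in>UNIV. arrow_vector k c $ i * (if i = k then (\<Sum>j\<in>UNIV-{k}. (c j)^2) - 1 else 0))"
    by (simp add: qform_def inner_vec_def arrow_matrix_mult_arrow_vector)
  then show ?thesis
    by (simp add: arrow_vector_def if_distrib[of "\<lambda>x. _ * x"] cong: if_cong)
qed

text \<open>Since G w = -d e_k for the arrow vector w, the inverse of G is the projection onto
  x_k = 0 plus w w^T / d.\<close>

definition arrow_inverse :: "'n::finite \<Rightarrow> ('n \<Rightarrow> real) \<Rightarrow> real^'n^'n" where
  "arrow_inverse k c = (\<chi> q r. (if q = r \<and> q \<noteq> k then 1 else 0)
     + arrow_vector k c $ q * arrow_vector k c $ r / (1 - (\<Sum>j\<in>UNIV-{k}. (c j)^2)))"

lemma matrix_inv_arrow_matrix: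
  fixes c :: "'n::finite \<Rightarrow> real"
  assumes "(\<Sum>j\<in>UNIV-{k}. (c j)^2) \<noteq> 1"
  shows "matrix_inv (arrow_matrix k c) = arrow_inverse k c"
proof (rule matrix_inv_eqI)
  define A where "A = arrow_matrix k c"
  define w where "w = arrow_vector k c"
  define d where "d = 1 - (\<Sum>j\<in>UNIV-{k}. (c j)^2)"
  have "d \<noteq> 0"
    using assms by (simp add: d_def)
  have Aw: "(A *v w) $ i = (if i = k then - d else 0)" for i
    by (simp add: A_def w_def d_def arrow_matrix_mult_arrow_vector)
  have "(A ** arrow_inverse k c) $ i $ m
      = (\<Sum>l\<in>UNIV. if l = m \<and> m \<noteq> k then A $ i $ m else 0) + (A *v w) $ i * w $ m / d" for i m
    by (simp add: A_def w_def d_def arrow_inverse_def matrix_matrix_mult_def matrix_vector_mult_def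
        distrib_left sum.distrib sum_distrib_right sum_divide_distrib mult.assoc if_distrib[of "\<lambda>x. _ * x"]
        cong: if_cong) (auto intro!: sum.cong)
  also have "\<dots> i m = (if m \<noteq> k then A $ i $ m else 0) - (if i = k then w $ m else 0)" for i m
    using \<open>d \<noteq> 0\<close> by (simp add: Aw)
  finally show "A ** arrow_inverse k c = mat 1"
    by (auto simp: vec_eq_iff mat_def A_def w_def arrow_matrix_def arrow_vector_def)
qed

lemma quadratic_arrow_inverse:
  fixes c h :: "'n::finite \<Rightarrow> real"
  shows "(\<Sum>q\<in>UNIV. \<Sum>r\<in>UNIV. arrow_inverse k c $ q $ r * h q * h r)
       = (\<Sum>q\<in>UNIV-{k}. (h q)^2)
         + (\<Sum>q\<in>UNIV. arrow_vector k c $ q * h q)^2 / (1 - (\<Sum>j\<in>UNIV-{k}. (c j)^2))"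
proof -
  define w where "w = arrow_vector k c"
  define d where "d = 1 - (\<Sum>j\<in>UNIV-{k}. (c j)^2)"
  define W where "W = (\<Sum>r\<in>UNIV. w $ r * h r)"
  have row: "(\<Sum>r\<in>UNIV. arrow_inverse k c $ q $ r * h q * h r)
      = (if q \<noteq> k then (h q)^2 else 0) + w $ q * h q * W / d" for q
  proof -
    have "(\<Sum>r\<in>UNIV. arrow_inverse k c $ q $ r * h q * h r)
        = (\<Sum>r\<in>UNIV. (if r = q \<and> q \<noteq> k then (h q)^2 else 0) + w $ q * h q * (w $ r * h r) / d)"
      by (intro sum.cong) (auto simp: arrow_inverse_def w_def d_def power2_eq_square algebra_simps)
    then show ?thesis
      by (cases "q = k") (simp_all add: W_def sum.distrib sum_distrib_left sum_divide_distrib)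
  qed
  have "(\<Sum>q\<in>UNIV. \<Sum>r\<in>UNIV. arrow_inverse k c $ q $ r * h q * h r)
      = (\<Sum>q\<in>UNIV. if q \<noteq> k then (h q)^2 else 0) + W * W / d"
    by (simp add: row sum.distrib W_def sum_distrib_right sum_divide_distrib)
  also have "(\<Sum>q\<in>UNIV. if q \<noteq> k then (h q)^2 else 0) = (\<Sum>q\<in>UNIV-{k}. (h q)^2)"
    by (rule sum.mono_neutral_cong_right) auto
  finally show ?thesis
    by (simp add: W_def w_def d_def power2_eq_square)
qed

lemma Hmat_entry_ratio_eq:
  fixes x y g :: real
  assumes "x \<noteq> 0"
  shows "2 * x * (x * g - y) / (x^2 - y^2) = 2 * (g - y / x) / (1 - (y / x)^2)"
    and "2 * y * (y * g - x) / (y^2 - x^2) = 2 * (y / x) * (y / x * g - 1) / ((y / x)^2 - 1)"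
proof -
  define r where "r = y / x"
  have y: "y = r * x"
    using assms by (simp add: r_def)
  have "x^2 \<noteq> 0"
    using assms by simp
  show "2 * x * (x * g - y) / (x^2 - y^2) = 2 * (g - y / x) / (1 - (y / x)^2)"
    using assms mult_divide_mult_cancel_left[OF \<open>x^2 \<noteq> 0\<close>, of "2 * (g - r)" "1 - r^2"]
    by (simp add: y power2_eq_square algebra_simps)
  show "2 * y * (y * g - x) / (y^2 - x^2) = 2 * (y / x) * (y / x * g - 1) / ((y / x)^2 - 1)"
    using assms mult_divide_mult_cancel_left[OF \<open>x^2 \<noteq> 0\<close>, of "2 * r * (r * g - 1)" "r^2 - 1"]
    by (simp add: y power2_eq_square algebra_simps)
qed

lemma tendsto_Hmat_entry_ratio:
  fixes x y :: "'a \<Rightarrow> real"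
  assumes ratio: "((\<lambda>t. y t / x t) \<longlongrightarrow> 0) F" and nonzero: "\<forall>\<^sub>F t in F. x t \<noteq> 0"
  shows "((\<lambda>t. 2 * x t * (x t * g - y t) / ((x t)^2 - (y t)^2)) \<longlongrightarrow> 2 * g) F"
    and "((\<lambda>t. 2 * y t * (y t * g - x t) / ((y t)^2 - (x t)^2)) \<longlongrightarrow> 0) F"
proof -
  have "((\<lambda>t. 2 * (g - y t / x t) / (1 - (y t / x t)^2)) \<longlongrightarrow> 2 * (g - 0) / (1 - 0^2)) F"
    by (intro tendsto_intros ratio) simp
  then have "((\<lambda>t. 2 * (g - y t / x t) / (1 - (y t / x t)^2)) \<longlongrightarrow> 2 * g) F"
    by simp
  then show "((\<lambda>t. 2 * x t * (x t * g - y t) / ((x t)^2 - (y t)^2)) \<longlongrightarrow> 2 * g) F"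
    by (rule Lim_transform_eventually[OF _ eventually_mono[OF nonzero]]) (simp_all add: Hmat_entry_ratio_eq)
  have "((\<lambda>t. 2 * (y t / x t) * (y t / x t * g - 1) / ((y t / x t)^2 - 1)) \<longlongrightarrow> 2 * 0 * (0 * g - 1) / (0^2 - 1)) F"
    by (intro tendsto_intros ratio) simp
  then have "((\<lambda>t. 2 * (y t / x t) * (y t / x t * g - 1) / ((y t / x t)^2 - 1)) \<longlongrightarrow> 0) F"
    by simp
  then show "((\<lambda>t. 2 * y t * (y t * g - x t) / ((y t)^2 - (x t)^2)) \<longlongrightarrow> 0) F"
    by (rule Lim_transform_eventually[OF _ eventually_mono[OF nonzero]]) (simp_all add: Hmat_entry_ratio_eq)
qed

lemma tendsto_power_ratio_at_top:
  assumes "a < b"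
  shows "((\<lambda>M::real. M ^ a / M ^ b) \<longlongrightarrow> 0) at_top"
proof -
  have "((\<lambda>M::real. inverse M ^ (b - a)) \<longlongrightarrow> 0) at_top"
    using assms tendsto_inverse_0_at_top[OF filterlim_ident] by simp
  moreover have "\<forall>\<^sub>F M::real in at_top. inverse M ^ (b - a) = M ^ a / M ^ b"
    by (rule eventually_mono[OF eventually_gt_at_top[of 0]])
      (use assms in \<open>simp add: power_diff_conv_inverse divide_inverse power_inverse\<close>)
  ultimately show ?thesis
    by (rule Lim_transform_eventually)
qed

lemma tendsto_Hmat_power_spread:
  fixes f :: "'n::finite \<Rightarrow> nat" and G :: "real^'n^'n"
  assumes "inj f"
  shows "((\<lambda>M. Hmat (\<chi> p. M ^ f p) G $ p $ q)
           \<longlongrightarrow> (if p = q then 1 else if f q < f p then 2 * G$p$q else 0)) at_top"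
proof (cases "p = q")
  case False
  have nonzero: "\<forall>\<^sub>F M in at_top. (M::real) ^ m \<noteq> 0" for m
    by (rule eventually_mono[OF eventually_gt_at_top[of 0]]) simp
  have "f p \<noteq> f q"
    using False assms by (auto dest: injD)
  then consider "f q < f p" | "f p < f q"
    by linarith
  then show ?thesis
  proof cases
    case 1
    then show ?thesis
      using tendsto_Hmat_entry_ratio(1)[OF tendsto_power_ratio_at_top[OF 1] nonzero, of "G$p$q"] False
      by (simp add: Hmat_def)
  next
    case 2
    then show ?thesis
      using tendsto_Hmat_entry_ratio(2)[OF tendsto_power_ratio_at_top[OF 2] nonzero, of "G$p$q"] False
      by (simp add: Hmat_def)
  qed
qed (simp add: Hmat_def)

definition row_form :: "real^'n \<Rightarrow> real^'n^'n \<Rightarrow> 'n \<Rightarrow> real" where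
  "row_form l G p = (\<Sum>q\<in>UNIV. \<Sum>r\<in>UNIV. matrix_inv G $ q $ r * Hmat l G $ p $ q * Hmat l G $ p $ r)"

lemma tendsto_row_form_arrow_matrix:
  fixes f :: "'n::finite \<Rightarrow> nat" and s :: 'n and c :: "'n \<Rightarrow> real"
  defines "G \<equiv> arrow_matrix s c" and "d \<equiv> 1 - (\<Sum>j\<in>UNIV-{s}. (c j)^2)"
  assumes "inj f" and f_s: "\<And>p. p \<noteq> s \<Longrightarrow> f s < f p" and "d \<noteq> 0"
  shows "((\<lambda>M. row_form (\<chi> p. M ^ f p) G p) \<longlongrightarrow> (if p = s then 1 / d else 1 + (c p)^2 / d)) at_top"
proof -
  define h where "h q = (if p = q then 1 else if q = s then 2 * c p else 0)" for q
  have "((\<lambda>M. Hmat (\<chi> p. M ^ f p) G $ p $ q) \<longlongrightarrow> h q) at_top" for q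
  proof -
    have "(if p = q then 1 else if f q < f p then 2 * G$p$q else 0) = h q"
      using f_s[of p] f_s[of q] by (auto simp: h_def G_def arrow_matrix_def)
    with tendsto_Hmat_power_spread[OF \<open>inj f\<close>, of G p q] show ?thesis
      by simp
  qed
  then have "((\<lambda>M. row_form (\<chi> p. M ^ f p) G p)
      \<longlongrightarrow> (\<Sum>q\<in>UNIV. \<Sum>r\<in>UNIV. matrix_inv G $ q $ r * h q * h r)) at_top"
    unfolding row_form_def by (intro tendsto_sum tendsto_mult tendsto_const)
  also have "(\<Sum>q\<in>UNIV. \<Sum>r\<in>UNIV. matrix_inv G $ q $ r * h q * h r)
      = (\<Sum>q\<in>UNIV-{s}. (h q)^2) + (\<Sum>q\<in>UNIV. arrow_vector s c $ q * h q)^2 / d"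
    using \<open>d \<noteq> 0\<close> by (simp add: G_def d_def matrix_inv_arrow_matrix quadratic_arrow_inverse)
  also have "\<dots> = (if p = s then 1 / d else 1 + (c p)^2 / d)"
  proof (cases "p = s")
    case True
    then show ?thesis
      by (simp add: h_def arrow_vector_def if_distrib[of "\<lambda>x. _ * x"] cong: if_cong)
  next
    case False
    have "(\<Sum>q\<in>UNIV-{s}. (h q)^2) = (\<Sum>q\<in>UNIV-{s}. if q = p then 1 else 0)"
      by (intro sum.cong) (auto simp: h_def)
    moreover have "(\<Sum>q\<in>UNIV. arrow_vector s c $ q * h q) = (\<Sum>q\<in>UNIV. (if q = p then c p else 0) + (if q = s then - 2 * c p else 0))"
      using False by (intro sum.cong) (auto simp: h_def arrow_vector_def)
    ultimately show ?thesis
      using False by (simp add: sum.distrib power2_eq_square)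
  qed
  finally show ?thesis .
qed

lemma exists_arrow_parameter:
  fixes N :: real
  assumes "2 \<le> N"
  shows "\<exists>a. 1 < (N - 1) * a^2 \<and> (N - 2) * a^2 < 1"
proof -
  define a where "a = sqrt (2 / (2 * N - 3))"
  have "a^2 = 2 / (2 * N - 3)" "a^2 > 0"
    using assms by (simp_all add: a_def)
  then have "2 * (N * a^2) = 2 + 3 * a^2" "a^2 > 0"
    using assms by (simp_all add: field_simps)
  then have "1 < (N - 1) * a^2 \<and> (N - 2) * a^2 < 1"
    unfolding left_diff_distrib by linarith
  then show ?thesis ..
qed

lemma eventually_row_form_arrow_matrix_neg:
  fixes f :: "'n::finite \<Rightarrow> nat" and s :: 'n and a :: real
  assumes "inj f" and "\<And>p. p \<noteq> s \<Longrightarrow> f s < f p"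
    and indefinite: "1 < (real CARD('n) - 1) * a^2" and minors: "(real CARD('n) - 2) * a^2 < 1"
  shows "\<forall>\<^sub>F M in at_top. \<forall>p. row_form (\<chi> p. M ^ f p) (arrow_matrix s (\<lambda>_. a)) p < 0"
proof -
  define d where "d = 1 - (real CARD('n) - 1) * a^2"
  have "d < 0"
    using indefinite by (simp add: d_def)
  have "1 + a^2 / d = (1 - (real CARD('n) - 2) * a^2) / d"
    using \<open>d < 0\<close> by (simp add: d_def field_simps)
  then have "1 + a^2 / d < 0"
    using minors \<open>d < 0\<close> by (simp add: divide_pos_neg)
  with \<open>d < 0\<close> show ?thesis
    by (intro eventually_all_finite order_tendstoD(2)[OF tendsto_row_form_arrow_matrix[OF \<open>inj f\<close>]])
      (use assms in \<open>auto simp: d_def real_card_UNIV_Diff_singleton\<close>)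
qed

lemma arrow_matrix_in_Theta:
  fixes s :: "'n::finite" and a :: real and l :: "real^'n"
  defines "G \<equiv> arrow_matrix s (\<lambda>_. a)"
  assumes indefinite: "1 < (real CARD('n) - 1) * a^2" and minors: "(real CARD('n) - 2) * a^2 < 1"
    and nonzero: "\<forall>p. l$p \<noteq> 0" and distinct: "\<forall>p q. p \<noteq> q \<longrightarrow> l$p \<noteq> l$q \<and> l$p \<noteq> - l$q"
    and rows: "\<forall>p. row_form l G p < 0"
  shows "(l, G) \<in> Theta"
proof -
  have "det G \<noteq> 0"
    using indefinite by (simp add: G_def det_arrow_matrix real_card_UNIV_Diff_singleton)
  have neg: "qform G (arrow_vector s (\<lambda>_. a)) < 0"
    using indefinite by (simp add: G_def qform_arrow_vector real_card_UNIV_Diff_singleton)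
  have pos: "qform G x > 0" if "axis s 1 \<bullet> x = 0" "x \<noteq> 0" for x
    using that by (simp add: G_def qform_arrow_matrix inner_axis')
  have "qform G (axis s 1) > 0"
    unfolding G_def qform_arrow_matrix inner_axis_axis by (simp add: axis_def)
  have "axis s (1::real) \<noteq> 0"
    by (metis axis_nth zero_index zero_neq_one)
  then have "neg_index G = 1"
    using neg_index_eq_1I[OF neg _ pos] by blast
  have "principal_minor G S > 0" if "card S \<le> CARD('n) - 1" for S
  proof (cases "s \<in> S")
    case True
    have "1 \<le> card S" "card S + 1 \<le> CARD('n)"
      using True that card_gt_0_iff[of S] card_gt_0_iff[of "UNIV :: 'n set"] by auto
    then have "real (card (S - {s})) \<le> real CARD('n) - 2"
      using True by (simp add: card_Diff_singleton of_nat_diff)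
    then have "real (card (S - {s})) * a^2 \<le> (real CARD('n) - 2) * a^2"
      by (intro mult_right_mono) auto
    with True show ?thesis
      using minors by (simp add: G_def principal_minor_arrow_matrix)
  qed (simp add: G_def principal_minor_arrow_matrix)
  moreover have "transpose G = G" "\<forall>p. G$p$p = 1"
    by (auto simp: vec_eq_iff transpose_def G_def arrow_matrix_def)
  ultimately show ?thesis
    using nonzero distinct rows \<open>det G \<noteq> 0\<close> neg \<open>qform G (axis s 1) > 0\<close> \<open>neg_index G = 1\<close>
    unfolding Theta_def mem_Collect_eq case_prod_conv row_form_def by blast
qed

theorem mainTheorem4:
  assumes "CARD('n::finite) \<ge> 2"
  shows "(Theta :: ((real^'n) \<times> (real^'n^'n)) set) \<noteq> {}"
proof -
  fix s :: 'n
  obtain a where indefinite: "1 < (real CARD('n) - 1) * a^2" and minors: "(real CARD('n) - 2) * a^2 < 1"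
    using exists_arrow_parameter[of "real CARD('n)"] assms by auto
  define f where "f p = (if p = s then 0 else Suc (to_nat p))" for p
  have "inj f" "\<And>p. p \<noteq> s \<Longrightarrow> f s < f p"
    by (auto simp: f_def inj_def)
  then have "\<forall>\<^sub>F M in at_top. 2 \<le> M \<and> (\<forall>p. row_form (\<chi> p. M ^ f p) (arrow_matrix s (\<lambda>_. a)) p < 0)"
    using eventually_row_form_arrow_matrix_neg[OF _ _ indefinite minors]
    by (simp add: eventually_conj)
  then obtain M :: real where "2 \<le> M" and rows: "\<forall>p. row_form (\<chi> p. M ^ f p) (arrow_matrix s (\<lambda>_. a)) p < 0"
    unfolding eventually_at_top_linorder by blast
  have pos: "0 < M ^ f p" for p
    using \<open>2 \<le> M\<close> by simp
  have "\<forall>p q. p \<noteq> q \<longrightarrow> M ^ f p \<noteq> M ^ f q \<and> M ^ f p \<noteq> - (M ^ f q)"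
    using \<open>inj f\<close> \<open>2 \<le> M\<close> by (smt (verit) inj_eq pos power_inject_exp)
  then have "((\<chi> p. M ^ f p), arrow_matrix s (\<lambda>_. a)) \<in> Theta"
    using indefinite minors rows \<open>2 \<le> M\<close> by (intro arrow_matrix_in_Theta) simp_all
  then show ?thesis
    by blast
qed

end
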